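(* Consider an $m$-player episodic Markov game with finite state space $\mathcal{S}$ ($|\mathcal{S}|=S$), action sets $\mathcal{A}_1,\dots,\mathcal{A}_m$ with $|\mathcal{A}_j|=A_j$, and horizon $H$, and an offline dataset of size $n$ in which, for each $h\in[H]$, the state–joint-action pairs $(s_h^k,\mathbf{a}_h^k)$, $k=1,\dots,n$, are i.i.d. with law $d_h$, all dataset tuples being mutually independent. Let $p_{\min}=\min_{s,\mathbf{a},h}\{d_h(s,\mathbf{a}):d_h(s,\mathbf{a})>0\}$ and $\delta\in(0,1)$. If $n\geq \frac{8\log(S\prod_{j\in[m]}A_jH/\delta)}{p_{\min}}$, then with probability at least $1-\delta$, for every joint strategy $\pi$ we have $2C(\pi)\geq \widehat{C}(\pi)$.
   Context: A (Markov) joint strategy is $\pi=(\pi_1,\dots,\pi_m)$ with $\pi_{h,j}:\mathcal{S}\to\Delta(\mathcal{A}_j)$; players act independently. From a fixed initial state $s_1$, $d_h^{\pi}(s,\mathbf{a})$ denotes the probability that $(s_h,\mathbf{a}_h)=(s,\mathbf{a})$ under $\pi$. For a strategy $\pi'$ and player $j$, $(\pi'_j,\pi_{-j})$ denotes the joint strategy where player $j$ uses $\pi'_j$ and all others use $\pi$. Let $n_h(s,\mathbf{a})$ be the number of $k$ with $(s_h^k,\mathbf{a}_h^k)=(s,\mathbf{a})$ and $\widehat{d}_h(s,\mathbf{a})=n_h(s,\mathbf{a})/n$. The population unilateral coefficient is $C(\pi)=\max_{h,j,\pi',s,\mathbf{a}} d_h^{\pi'_j,\pi_{-j}}(s,\mathbf{a})/d_h(s,\mathbf{a})$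 and the empirical unilateral coefficient is $\widehat{C}(\pi)=\max_{h,j,\pi',s,\mathbf{a}} d_h^{\pi'_j,\pi_{-j}}(s,\mathbf{a})/\widehat{d}_h(s,\mathbf{a})$ (maxima over $h\in[H]$, $j\in[m]$, all strategies $\pi'$, $s\in\mathcal{S}$, joint actions $\mathbf{a}$; with conventions $0/0=0$ and $x/0=+\infty$ for $x>0$). *)

theory Defs
  imports "HOL-Probability.Probability"
begin

text \<open>Markov game: players are 0..<m, player j has action set A j (subset of a common
type 'a). A (Markov) joint strategy is
sg h j s :: 'a pmf (player j's mixed action at step h in state s); players act independently.
Transition kernel P h s a :: 's pmf; initial state s1. Steps are h = 1..H.\<close>

type_synonym ('s,'a) strategy = "nat \<Rightarrow> nat \<Rightarrow> 's \<Rightarrow> 'a pmf"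

definition valid_strategy :: "nat \<Rightarrow> (nat \<Rightarrow> 'a set) \<Rightarrow> ('s,'a) strategy \<Rightarrow> bool" where
  "valid_strategy m A sg \<longleftrightarrow> (\<forall>h j s. j < m \<longrightarrow> set_pmf (sg h j s) \<subseteq> A j)"

definition joint_action :: "nat \<Rightarrow> ('s,'a) strategy \<Rightarrow> nat \<Rightarrow> 's \<Rightarrow> (nat \<Rightarrow> 'a) pmf" where
  "joint_action m sg h s = Pi_pmf {..<m} undefined (\<lambda>j. sg h j s)"

definition deviate :: "nat \<Rightarrow> ('s,'a) strategy \<Rightarrow> ('s,'a) strategy \<Rightarrow> ('s,'a) strategy" where
  "deviate j sg' sg = (\<lambda>h i s. if i = j then sg' h i s else sg h i s)"

text \<open>state_occ ... h : law of s_h (h \<ge> 1); sa_occ ... h : law of (s_h, a_h).\<close>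
fun state_occ :: "nat \<Rightarrow> (nat \<Rightarrow> 's \<Rightarrow> (nat \<Rightarrow> 'a) \<Rightarrow> 's pmf) \<Rightarrow> 's \<Rightarrow> ('s,'a) strategy
      \<Rightarrow> nat \<Rightarrow> 's pmf" where
  "state_occ m P s1 sg 0 = return_pmf s1"
| "state_occ m P s1 sg (Suc 0) = return_pmf s1"
| "state_occ m P s1 sg (Suc (Suc h)) =
     bind_pmf (state_occ m P s1 sg (Suc h))
       (\<lambda>s. bind_pmf (joint_action m sg (Suc h) s) (\<lambda>a. P (Suc h) s a))"

definition sa_occ :: "nat \<Rightarrow> (nat \<Rightarrow> 's \<Rightarrow> (nat \<Rightarrow> 'a) \<Rightarrow> 's pmf) \<Rightarrow> 's \<Rightarrow> ('s,'a) strategy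
      \<Rightarrow> nat \<Rightarrow> ('s \<times> (nat \<Rightarrow> 'a)) pmf" where
  "sa_occ m P s1 sg h =
     bind_pmf (state_occ m P s1 sg h) (\<lambda>s. map_pmf (\<lambda>a. (s, a)) (joint_action m sg h s))"

definition ratio :: "real \<Rightarrow> real \<Rightarrow> ereal" where
  "ratio x y = (if y = 0 then (if x = 0 then 0 else \<infinity>) else ereal (x / y))"

definition unilateral_coeff ::
  "nat \<Rightarrow> (nat \<Rightarrow> 'a set) \<Rightarrow> nat \<Rightarrow> (nat \<Rightarrow> 's \<Rightarrow> (nat \<Rightarrow> 'a) \<Rightarrow> 's pmf) \<Rightarrow> 's
   \<Rightarrow> (nat \<Rightarrow> 's \<times> (nat \<Rightarrow> 'a) \<Rightarrow> real) \<Rightarrow> ('s,'a) strategy \<Rightarrow> ereal" where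
  "unilateral_coeff m A H P s1 dref sg =
     (SUP x \<in> {(h, j, sg', s, a). h \<in> {1..H} \<and> j < m \<and> valid_strategy m A sg'
                                  \<and> a \<in> PiE {..<m} A}.
        case x of (h, j, sg', s, a) \<Rightarrow>
          ratio (pmf (sa_occ m P s1 (deviate j sg' sg) h) (s, a)) (dref h (s, a)))"

definition pop_coeff where
  "pop_coeff m A H P s1 (d :: nat \<Rightarrow> ('s \<times> (nat \<Rightarrow> 'a)) pmf) sg =
     unilateral_coeff m A H P s1 (\<lambda>h x. pmf (d h) x) sg"

text \<open>Dataset D (h,k) = (s_h^k, a_h^k), h \<in> [H], k \<in> [n].  Empirical count and distribution.\<close>
definition count_sa :: "nat \<Rightarrow> (nat \<times> nat \<Rightarrow> 's \<times> (nat \<Rightarrow> 'a)) \<Rightarrow> nat \<Rightarrow> 's \<times> (nat \<Rightarrow> 'a) \<Rightarrow> nat" where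
  "count_sa n D h x = card {k \<in> {1..n}. D (h, k) = x}"

definition emp_dist :: "nat \<Rightarrow> (nat \<times> nat \<Rightarrow> 's \<times> (nat \<Rightarrow> 'a)) \<Rightarrow> nat \<Rightarrow> 's \<times> (nat \<Rightarrow> 'a) \<Rightarrow> real" where
  "emp_dist n D h x = real (count_sa n D h x) / real n"

definition emp_coeff where
  "emp_coeff m A H P s1 n (D :: nat \<times> nat \<Rightarrow> 's \<times> (nat \<Rightarrow> 'a)) sg =
     unilateral_coeff m A H P s1 (emp_dist n D) sg"

definition dataset_law :: "nat \<Rightarrow> nat \<Rightarrow> (nat \<Rightarrow> ('s \<times> (nat \<Rightarrow> 'a)) pmf)
     \<Rightarrow> (nat \<times> nat \<Rightarrow> 's \<times> (nat \<Rightarrow> 'a)) pmf" where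
  "dataset_law H n d = Pi_pmf ({1..H} \<times> {1..n}) undefined (\<lambda>(h, k). d h)"

definition p_min :: "nat \<Rightarrow> (nat \<Rightarrow> ('s \<times> (nat \<Rightarrow> 'a)) pmf) \<Rightarrow> real" where
  "p_min H d = Min {pmf (d h) x | h x. h \<in> {1..H} \<and> pmf (d h) x > 0}"

end

theory Submission
  imports Defs
begin

text \<open>For each support point (h, x) of the data distributions, the count of x at step h is
binomial with mean n d_h(x) \<ge> n p_min, so by a multiplicative Chernoff bound it falls below half
its mean with probability at most exp(-n p_min / 8) \<le> \<delta> / (S \<Prod>A_j H). A union bound over the
at most S \<Prod>A_j H support points shows that with probability at least 1 - \<delta> the empirical
distribution is at least half of d_h on the support of every d_h; there every ratio in the
definition of the empirical coefficient is at most twice the corresponding population ratio.\<close>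

lemma ln_2_le_3_4: "ln (2::real) \<le> 3/4"
proof -
  have "1 + 3/4 + (3/4)\<^sup>2/2 \<le> exp (3/4::real)" by (rule exp_lower_Taylor_quadratic) simp
  hence "2 \<le> exp (3/4::real)" by (simp add: power2_eq_square)
  thus ?thesis by (metis ln_exp ln_le_cancel_iff exp_gt_zero zero_less_numeral)
qed

lemma one_minus_half_power_mult_powr_le_exp:
  fixes p :: real and N :: nat
  assumes "0 \<le> p" "p \<le> 1"
  shows "(1 - p/2) ^ N * 2 powr (real N * p / 2) \<le> exp (- real N * p / 8)"
proof -
  have "(1 - p/2) ^ N \<le> exp (-p/2) ^ N"
    using assms by (intro power_mono) (use exp_ge_add_one_self[of "-p/2"] in auto)
  also have "\<dots> = exp (- real N * p / 2)" by (simp flip: exp_of_nat_mult)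
  moreover have "2 powr (real N * p / 2) = exp (ln 2 * (real N * p / 2))"
    by (simp add: powr_def)
  ultimately have "(1 - p/2) ^ N * 2 powr (real N * p / 2)
                     \<le> exp (- real N * p / 2) * exp (ln 2 * (real N * p / 2))"
    by simp
  also have "\<dots> = exp (- real N * p / 2 + ln 2 * (real N * p / 2))" by (simp only: exp_add)
  also have "\<dots> \<le> exp (- real N * p / 8)"
  proof -
    have "ln 2 * (real N * p / 2) \<le> 3/4 * (real N * p / 2)"
      using ln_2_le_3_4 assms by (intro mult_right_mono) auto
    thus ?thesis by (simp add: algebra_simps)
  qed
  finally show ?thesis .
qed

lemma expectation_half_power_count_Pi_pmf:
  fixes q :: "'i \<Rightarrow> 'b pmf"
  assumes "finite J" "Js \<subseteq> J" "\<And>j. j \<in> Js \<Longrightarrow> q j = r"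
  shows "measure_pmf.expectation (Pi_pmf J dflt q) (\<lambda>D. (1/2) ^ card {j\<in>Js. D j = x})
           = (1 - pmf r x / 2) ^ card Js"
proof -
  define f where "f = (\<lambda>j y. if j \<in> Js \<and> y = x then 1/2 else (1::real))"
  have prod_f: "(\<Prod>j\<in>J. f j (D j)) = (1/2) ^ card {j\<in>Js. D j = x}" for D
  proof -
    have "(\<Prod>j\<in>J. f j (D j)) = (\<Prod>j\<in>J. if j \<in> {j\<in>Js. D j = x} then 1/2 else 1)"
      unfolding f_def by (intro prod.cong) auto
    also have "\<dots> = (1/2) ^ card (J \<inter> {j\<in>Js. D j = x})"
      by (subst prod.If_cases[OF \<open>finite J\<close>]) simp
    finally show ?thesis using \<open>Js \<subseteq> J\<close> by (simp add: Int_absorb1 subset_iff)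
  qed
  have f_int: "integrable (measure_pmf (q j)) (f j)" for j
    by (rule measure_pmf.integrable_const_bound[where B=1]) (auto simp: f_def)
  have E_f: "measure_pmf.expectation (q j) (f j) = (if j \<in> Js then 1 - pmf r x / 2 else 1)" for j
  proof (cases "j \<in> Js")
    case True
    have "f j = (\<lambda>y. 1 - (1/2) * indicator {x} y)" using True by (auto simp: f_def fun_eq_iff)
    hence "measure_pmf.expectation (q j) (f j) = 1 - (1/2) * measure_pmf.prob (q j) {x}"
      by (simp add: Bochner_Integration.integral_diff measure_pmf.integrable_const_bound[where B=1])
    thus ?thesis using True assms(3) by (simp add: measure_pmf_single)
  qed (simp add: f_def)
  have "measure_pmf.expectation (Pi_pmf J dflt q) (\<lambda>D. \<Prod>j\<in>J. f j (D j))
          = (\<Prod>j\<in>J. measure_pmf.expectation (q j) (f j))"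
    by (rule expectation_prod_Pi_pmf[OF \<open>finite J\<close> f_int]) (auto simp: f_def)
  also have "\<dots> = (1 - pmf r x / 2) ^ card (J \<inter> Js)"
    by (simp add: E_f prod.If_cases[OF \<open>finite J\<close>])
  finally show ?thesis using \<open>Js \<subseteq> J\<close> by (simp add: prod_f Int_absorb1)
qed

text \<open>Markov's inequality applied to the exponential moment (1/2)^count.\<close>
lemma Pi_pmf_count_lower_tail:
  fixes q :: "'i \<Rightarrow> 'b pmf"
  assumes J: "finite J" and Js: "Js \<subseteq> J" and q: "\<And>j. j \<in> Js \<Longrightarrow> q j = r"
  shows "measure_pmf.prob (Pi_pmf J dflt q)
           {D. real (card {j\<in>Js. D j = x}) < real (card Js) * pmf r x / 2}
         \<le> exp (- real (card Js) * pmf r x / 8)"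
proof -
  define p where "p = pmf r x"
  define N where "N = card Js"
  define g where "g = (\<lambda>D. (1/2::real) ^ card {j\<in>Js. D j = x})"
  define c where "c = (1/2::real) powr (N * p / 2)"
  let ?Q = "Pi_pmf J dflt q"
  have "0 \<le> p" "p \<le> 1" by (auto simp: p_def pmf_le_1)
  have g_int: "integrable (measure_pmf ?Q) g"
    by (rule measure_pmf.integrable_const_bound[where B=1]) (auto simp: g_def power_le_one)
  have "{D. real (card {j\<in>Js. D j = x}) < real N * p / 2} \<subseteq> {D \<in> space (measure_pmf ?Q). g D \<ge> c}"
    by (auto simp: c_def g_def powr_realpow[symmetric] intro!: powr_mono')
  hence "measure_pmf.prob ?Q {D. real (card {j\<in>Js. D j = x}) < real N * p / 2}
          \<le> measure_pmf.prob ?Q {D \<in> space (measure_pmf ?Q). g D \<ge> c}"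
    by (rule measure_pmf.finite_measure_mono) simp
  also have "\<dots> \<le> measure_pmf.expectation ?Q g / c"
    by (rule integral_Markov_inequality_measure[OF g_int]) (auto simp: g_def c_def)
  also have "\<dots> = (1 - p/2) ^ N * 2 powr (N * p / 2)"
    using expectation_half_power_count_Pi_pmf[OF J Js q]
    by (simp add: g_def c_def p_def N_def powr_divide)
  also have "\<dots> \<le> exp (- real N * p / 8)"
    by (rule one_minus_half_power_mult_powr_le_exp) fact+
  finally show ?thesis by (simp add: N_def p_def)
qed

lemma count_sa_eq_card_slice:
  "count_sa n D h x = card {j \<in> {h} \<times> {1..n}. D j = x}"
proof -
  have "{j \<in> {h} \<times> {1..n}. D j = x} = Pair h ` {k \<in> {1..n}. D (h, k) = x}" by auto
  thus ?thesis unfolding count_sa_def by (simp add: card_image inj_on_def)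
qed

lemma dataset_law_count_lower_tail:
  assumes "h \<in> {1..H}"
  shows "measure_pmf.prob (dataset_law H n d)
           {D. real (count_sa n D h x) < real n * pmf (d h) x / 2}
         \<le> exp (- real n * pmf (d h) x / 8)"
proof -
  have "measure_pmf.prob (Pi_pmf ({1..H} \<times> {1..n}) undefined (\<lambda>(h, k). d h))
          {D. real (card {j \<in> {h} \<times> {1..n}. D j = x}) < real (card ({h} \<times> {1..n})) * pmf (d h) x / 2}
        \<le> exp (- real (card ({h} \<times> {1..n})) * pmf (d h) x / 8)"
    using assms by (intro Pi_pmf_count_lower_tail) auto
  thus ?thesis by (simp add: dataset_law_def count_sa_eq_card_slice card_cartesian_product)
qed

lemma p_min_eq_Min_support:
  "p_min H d = Min ((\<lambda>(h, x). pmf (d h) x) ` (SIGMA h:{1..H}. set_pmf (d h)))"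
  unfolding p_min_def by (rule arg_cong[where f = Min]) (auto simp: pmf_positive_iff image_iff; blast)

lemma p_min_le_pmf:
  assumes "finite (SIGMA h:{1..H}. set_pmf (d h))" "h \<in> {1..H}" "x \<in> set_pmf (d h)"
  shows "p_min H d \<le> pmf (d h) x"
  unfolding p_min_eq_Min_support using assms by (intro Min_le) auto

lemma p_min_pos:
  assumes "finite (SIGMA h:{1..H}. set_pmf (d h))" "H \<ge> 1"
  shows "p_min H d > 0"
proof -
  obtain x where "x \<in> set_pmf (d 1)" using set_pmf_not_empty by fast
  hence "(1, x) \<in> (SIGMA h:{1..H}. set_pmf (d h))" using assms(2) by auto
  hence "(SIGMA h:{1..H}. set_pmf (d h)) \<noteq> {}" by blast
  thus ?thesis unfolding p_min_eq_Min_support using assms(1)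
    by (subst Min_gr_iff) (auto simp: pmf_positive_iff)
qed

lemma prob_avoid_all_ge_union_bound:
  fixes M :: "'a pmf"
  assumes "finite I" "\<And>i. i \<in> I \<Longrightarrow> measure_pmf.prob M (B i) \<le> \<epsilon>"
  shows "measure_pmf.prob M {x. \<forall>i\<in>I. x \<notin> B i} \<ge> 1 - real (card I) * \<epsilon>"
proof -
  have "measure_pmf.prob M (\<Union>i\<in>I. B i) \<le> (\<Sum>i\<in>I. measure_pmf.prob M (B i))"
    using assms(1) by (intro measure_pmf.finite_measure_subadditive_finite) auto
  also have "\<dots> \<le> real (card I) * \<epsilon>" using sum_mono[of I _ "\<lambda>_. \<epsilon>"] assms(2) by simp
  finally have "measure_pmf.prob M (\<Union>i\<in>I. B i) \<le> real (card I) * \<epsilon>" .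
  moreover have "{x. \<forall>i\<in>I. x \<notin> B i} = UNIV - (\<Union>i\<in>I. B i)" by auto
  ultimately show ?thesis by (simp add: measure_pmf.prob_compl[simplified])
qed

lemma dataset_law_emp_dist_ge_half:
  fixes H n :: nat and d :: "nat \<Rightarrow> ('s \<times> (nat \<Rightarrow> 'a)) pmf"
  defines "I \<equiv> SIGMA h:{1..H}. set_pmf (d h)"
  assumes "n > 0" "finite I"
  shows "measure_pmf.prob (dataset_law H n d)
           {D. \<forall>(h, x)\<in>I. emp_dist n D h x \<ge> pmf (d h) x / 2}
         \<ge> 1 - real (card I) * exp (- real n * p_min H d / 8)"
proof -
  define Bad where "Bad = (\<lambda>(h, x). {D. real (count_sa n D h x) < real n * pmf (d h) x / 2})"
  have "measure_pmf.prob (dataset_law H n d) (Bad (h, x)) \<le> exp (- real n * p_min H d / 8)"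
    if "(h, x) \<in> I" for h x
  proof -
    have "measure_pmf.prob (dataset_law H n d) (Bad (h, x)) \<le> exp (- real n * pmf (d h) x / 8)"
      unfolding Bad_def case_prod_conv using that
      by (intro dataset_law_count_lower_tail) (simp add: I_def)
    also have "\<dots> \<le> exp (- real n * p_min H d / 8)"
      using p_min_le_pmf[of H d h x] that assms(3) by (simp add: I_def mult_left_mono)
    finally show ?thesis .
  qed
  hence "measure_pmf.prob (dataset_law H n d) {D. \<forall>i\<in>I. D \<notin> Bad i}
           \<ge> 1 - real (card I) * exp (- real n * p_min H d / 8)"
    using assms(3) by (intro prob_avoid_all_ge_union_bound) auto
  moreover have "{D. \<forall>i\<in>I. D \<notin> Bad i} = {D. \<forall>(h, x)\<in>I. emp_dist n D h x \<ge> pmf (d h) x / 2}"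
    using \<open>n > 0\<close> by (auto simp: Bad_def emp_dist_def field_simps)
  ultimately show ?thesis by simp
qed

lemma ratio_le_2_ratio:
  assumes "0 \<le> u" "0 \<le> e" "0 \<le> p" "p > 0 \<Longrightarrow> e \<ge> p / 2"
  shows "ratio u e \<le> 2 * ratio u p"
proof (cases "p = 0")
  case True
  then show ?thesis using assms by (cases "u = 0") (auto simp: ratio_def)
next
  case False
  hence "p > 0" "e \<ge> p / 2" "e > 0" using assms by auto
  hence "u / e \<le> u / (p / 2)" using assms(1) by (intro divide_left_mono) auto
  hence "u / e \<le> 2 * (u / p)" by (simp add: mult.commute)
  thus ?thesis using \<open>p > 0\<close> \<open>e > 0\<close> by (simp add: ratio_def)
qed

lemma unilateral_coeff_le_2_unilateral_coeff:
  fixes sg :: "('s, 'a) strategy"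
  assumes "\<And>h x. h \<in> {1..H} \<Longrightarrow> 0 \<le> e h x" "\<And>h x. h \<in> {1..H} \<Longrightarrow> 0 \<le> dref h x"
    and "\<And>h x. h \<in> {1..H} \<Longrightarrow> dref h x > 0 \<Longrightarrow> e h x \<ge> dref h x / 2"
  shows "unilateral_coeff m A H P s1 e sg \<le> 2 * unilateral_coeff m A H P s1 dref sg"
  unfolding unilateral_coeff_def
proof (rule SUP_least, clarify)
  fix h j s a and sg' :: "('s, 'a) strategy"
  assume y: "h \<in> {1..H}" "j < m" "valid_strategy m A sg'" "a \<in> PiE {..<m} A"
  let ?u = "pmf (sa_occ m P s1 (deviate j sg' sg) h) (s, a)"
  have "ratio ?u (e h (s, a)) \<le> 2 * ratio ?u (dref h (s, a))"
    using assms y(1) by (intro ratio_le_2_ratio) auto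
  also have "\<dots> \<le> 2 * (SUP x\<in>{(h, j, sg', s, a). h \<in> {1..H} \<and> j < m \<and> valid_strategy m A sg'
                                          \<and> a \<in> PiE {..<m} A}.
                        case x of (h, j, sg', s, a) \<Rightarrow>
                          ratio (pmf (sa_occ m P s1 (deviate j sg' sg) h) (s, a)) (dref h (s, a)))"
    using y by (intro ereal_mult_left_mono SUP_upper2[where i = "(h, j, sg', s, a)"]) auto
  finally show "ratio ?u (e h (s, a)) \<le> \<dots>" .
qed

lemma emp_coeff_le_2_pop_coeff:
  assumes "\<forall>(h, x)\<in>(SIGMA h:{1..H}. set_pmf (d h)). emp_dist n D h x \<ge> pmf (d h) x / 2"
  shows "emp_coeff m A H P s1 n D sg \<le> 2 * pop_coeff m A H P s1 d sg"
  unfolding pop_coeff_def emp_coeff_def using assms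
  by (intro unilateral_coeff_le_2_unilateral_coeff) (auto simp: emp_dist_def pmf_positive_iff)

lemma finite_card_support_le:
  assumes "finite X" "\<And>h. h \<in> {1..H} \<Longrightarrow> set_pmf (d h) \<subseteq> X"
  shows "finite (SIGMA h:{1..H}. set_pmf (d h))" and "card (SIGMA h:{1..H}. set_pmf (d h)) \<le> H * card X"
proof -
  have sub: "(SIGMA h:{1..H}. set_pmf (d h)) \<subseteq> {1..H} \<times> X" using assms(2) by blast
  have fin: "finite ({1..H} \<times> X)" using assms(1) by simp
  show "finite (SIGMA h:{1..H}. set_pmf (d h))" by (rule finite_subset[OF sub fin])
  have "card (SIGMA h:{1..H}. set_pmf (d h)) \<le> card ({1..H} \<times> X)" by (rule card_mono[OF fin sub])
  thus "card (SIGMA h:{1..H}. set_pmf (d h)) \<le> H * card X" by (simp add: card_cartesian_product)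
qed

lemma sample_size_exp_bound:
  fixes K p \<delta> :: real
  assumes "K \<ge> 1" "0 < \<delta>" "\<delta> < 1" "p > 0" "real n \<ge> 8 * ln (K / \<delta>) / p"
  shows "n > 0" and "exp (- real n * p / 8) \<le> \<delta> / K"
proof -
  have "ln (K / \<delta>) > 0" using assms(1-3) by (intro ln_gt_zero) (simp add: field_simps)
  moreover have n_p: "real n * p \<ge> 8 * ln (K / \<delta>)"
    using assms(4,5) by (simp add: pos_divide_le_eq)
  ultimately show "n > 0" using assms(4) by (cases n) auto
  have "exp (- real n * p / 8) \<le> exp (- ln (K / \<delta>))" using n_p by simp
  also have "\<dots> = \<delta> / K" using assms(1,2) by (simp add: exp_minus exp_ln)
  finally show "exp (- real n * p / 8) \<le> \<delta> / K" .
qed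

theorem proposition1:
  fixes m H n :: nat
    and A :: "nat \<Rightarrow> 'a set"
    and P :: "nat \<Rightarrow> 's::finite \<Rightarrow> (nat \<Rightarrow> 'a) \<Rightarrow> 's pmf"
    and s1 :: 's
    and d :: "nat \<Rightarrow> ('s \<times> (nat \<Rightarrow> 'a)) pmf"
    and \<delta> :: real
  assumes "m \<ge> 1" and "H \<ge> 1"
    and "\<And>j. j < m \<Longrightarrow> finite (A j) \<and> A j \<noteq> {}"
    and "\<And>h. h \<in> {1..H} \<Longrightarrow> set_pmf (d h) \<subseteq> UNIV \<times> PiE {..<m} A"
    and "0 < \<delta>" and "\<delta> < 1"
    and "real n \<ge> 8 * ln (real (card (UNIV :: 's set)) * (\<Prod>j<m. real (card (A j))) * real H / \<delta>)
                   / p_min H d"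
  shows "measure_pmf.prob (dataset_law H n d)
           {D. \<forall>sg. valid_strategy m A sg \<longrightarrow>
                 2 * pop_coeff m A H P s1 d sg \<ge> emp_coeff m A H P s1 n D sg}
         \<ge> 1 - \<delta>"
proof -
  define X where "X = (UNIV :: 's set) \<times> PiE {..<m} A"
  define I where "I = (SIGMA h:{1..H}. set_pmf (d h))"
  define K where "K = real (card (UNIV :: 's set)) * (\<Prod>j<m. real (card (A j))) * real H"
  have "finite X" "X \<noteq> {}" using assms(3) by (auto simp: X_def PiE_eq_empty_iff intro!: finite_PiE)
  have K_eq: "K = real (H * card X)" by (simp add: K_def X_def card_cartesian_product card_PiE)
  have "H * card X \<ge> 1" using \<open>finite X\<close> \<open>X \<noteq> {}\<close> assms(2) by (simp add: Suc_le_eq card_gt_0_iff)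
  hence "K \<ge> 1" unfolding K_eq by linarith
  have "\<And>h. h \<in> {1..H} \<Longrightarrow> set_pmf (d h) \<subseteq> X" using assms(4) by (simp add: X_def)
  note finite_card_support_le[of X H d, OF \<open>finite X\<close> this, folded I_def]
  hence "finite I" and "real (card I) \<le> K" unfolding K_eq by (simp_all only: of_nat_le_iff)
  have "p_min H d > 0" using \<open>finite I\<close> assms(2) unfolding I_def by (rule p_min_pos)
  note n_large = sample_size_exp_bound[OF \<open>K \<ge> 1\<close> assms(5,6) this assms(7)[folded K_def]]
  have "1 - \<delta> \<le> 1 - real (card I) * exp (- real n * p_min H d / 8)"
    using mult_mono[OF \<open>real (card I) \<le> K\<close> n_large(2)] \<open>K \<ge> 1\<close> by simp
  also have "\<dots> \<le> measure_pmf.prob (dataset_law H n d)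
                    {D. \<forall>(h, x)\<in>I. emp_dist n D h x \<ge> pmf (d h) x / 2}"
    using n_large(1) \<open>finite I\<close> unfolding I_def by (rule dataset_law_emp_dist_ge_half)
  also have "\<dots> \<le> measure_pmf.prob (dataset_law H n d)
                    {D. \<forall>sg. valid_strategy m A sg \<longrightarrow>
                          2 * pop_coeff m A H P s1 d sg \<ge> emp_coeff m A H P s1 n D sg}"
    using emp_coeff_le_2_pop_coeff[of H d n] unfolding I_def
    by (intro measure_pmf.finite_measure_mono) auto
  finally show ?thesis .
qed

end
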